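(* Let $n\ge2$ and let $P_n$ be the path on $n$ vertices. There exist pairs of vertices $\{a,b\}\neq\{c,d\}$ of $P_n$, at least one of which is an edge, such that there is perfect plus state transfer between $e_a+e_b$ and $e_c+e_d$ in $P_n$, if and only if $n\in\{3,4\}$.
   Context: For a graph with adjacency matrix $A$ and degree matrix $\Delta$, the unsigned Laplacian is $L_+=\Delta+A$. Perfect plus state transfer between $e_a+e_b$ and $e_c+e_d$ means $\exp(itL_+)(e_a+e_b)=\gamma(e_c+e_d)$ for some $t\ge0$ and $\gamma\in\mathbb{C}$, $|\gamma|=1$, where $e_v$ is the standard basis vector of $v$. *)

theory Defs
  imports Complex_Main
begin

text \<open>Graphs on the vertex set {0..<n}, given by a symmetric adjacency predicate.
  Square matrices of size n are functions nat => nat => complex, only entries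
  with indices < n are meaningful.\<close>

definition path_adj :: "nat \<Rightarrow> nat \<Rightarrow> nat \<Rightarrow> bool" where
  "path_adj n i j \<longleftrightarrow> i < n \<and> j < n \<and> (i + 1 = j \<or> j + 1 = i)"

definition degree :: "nat \<Rightarrow> (nat \<Rightarrow> nat \<Rightarrow> bool) \<Rightarrow> nat \<Rightarrow> nat" where
  "degree n adj i = card {j. j < n \<and> adj i j}"

definition unsigned_laplacian :: "nat \<Rightarrow> (nat \<Rightarrow> nat \<Rightarrow> bool) \<Rightarrow> nat \<Rightarrow> nat \<Rightarrow> complex" where
  "unsigned_laplacian n adj i j =
     (if i = j then of_nat (degree n adj i) else 0) + (if adj i j then 1 else 0)"

definition mat_mult :: "nat \<Rightarrow> (nat \<Rightarrow> nat \<Rightarrow> complex) \<Rightarrow> (nat \<Rightarrow> nat \<Rightarrow> complex) \<Rightarrow> nat \<Rightarrow> nat \<Rightarrow> complex" where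
  "mat_mult n A B i j = (\<Sum>l<n. A i l * B l j)"

fun mat_pow :: "nat \<Rightarrow> (nat \<Rightarrow> nat \<Rightarrow> complex) \<Rightarrow> nat \<Rightarrow> nat \<Rightarrow> nat \<Rightarrow> complex" where
  "mat_pow n A 0 = (\<lambda>i j. if i = j then 1 else 0)"
| "mat_pow n A (Suc k) = mat_mult n A (mat_pow n A k)"

definition mat_exp :: "nat \<Rightarrow> (nat \<Rightarrow> nat \<Rightarrow> complex) \<Rightarrow> nat \<Rightarrow> nat \<Rightarrow> complex" where
  "mat_exp n A i j = (\<Sum>k. mat_pow n A k i j / of_nat (fact k))"

definition mat_vec :: "nat \<Rightarrow> (nat \<Rightarrow> nat \<Rightarrow> complex) \<Rightarrow> (nat \<Rightarrow> complex) \<Rightarrow> nat \<Rightarrow> complex" where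
  "mat_vec n A v i = (\<Sum>j<n. A i j * v j)"

definition basis_vec :: "nat \<Rightarrow> nat \<Rightarrow> complex" where
  "basis_vec a i = (if i = a then 1 else 0)"

definition plus_pst :: "nat \<Rightarrow> (nat \<Rightarrow> nat \<Rightarrow> bool) \<Rightarrow> nat \<Rightarrow> nat \<Rightarrow> nat \<Rightarrow> nat \<Rightarrow> bool" where
  "plus_pst n adj a b c d \<longleftrightarrow>
     (\<exists>t::real. t \<ge> 0 \<and> (\<exists>\<gamma>::complex. cmod \<gamma> = 1 \<and>
        (\<forall>i<n. mat_vec n (mat_exp n (\<lambda>k l. \<i> * of_real t * unsigned_laplacian n adj k l))
                   (\<lambda>v. basis_vec a v + basis_vec b v) i
               = \<gamma> * (basis_vec c i + basis_vec d i))))"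

end

theory Submission
  imports Defs
begin

text \<open>The signless Laplacian L of P_n has the eigenvectors w_k(i) = (-1)^i cos (k(2i+1)\<pi>/2n)
  with eigenvalues \<lambda>_k = 2 - 2 cos (k\<pi>/n). Transfer from e_a + e_b to e_c + e_d at time t with
  phase \<gamma> gives exp (i t \<lambda>_k) (w_k(a) + w_k(b)) = \<gamma> (w_k(c) + w_k(d)) for every k. Taking moduli,
  both pairs have the same value of the quadratic form of L, which is at least 5 on edges and at
  most 4 on non-edges once n \<ge> 3; so both pairs are edges {A, A+1} and {C, C+1}. For k = 1 the
  moduli force A + C + 2 = n, and the reflection symmetry of w_k then fixes the phases
  exp (i t \<lambda>_k) = \<gamma> (-1)^(n-1+k) whenever w_k(A) + w_k(A+1) \<noteq> 0. As \<lambda>_(n-k) - \<lambda>_k = 4 cos (k\<pi>/n),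
  comparing k with n - k gives t cos (k\<pi>/n) \<in> (\<pi>/4)\<int> for k = 1, 2 and for k = 3 or 4, and the
  multiple-angle formulas make cos (\<pi>/n) rational, which fails for n \<ge> 4 (Niven). For n = 3, 4
  explicit eigendecompositions give transfer from {0, 1} to {1, 2} and to {2, 3}.\<close>

section \<open>Matrix exponential\<close>

lemma norm_mat_pow_le:
  fixes M :: "nat \<Rightarrow> nat \<Rightarrow> complex" and n :: nat
  defines "B \<equiv> (\<Sum>i<n. \<Sum>j<n. cmod (M i j))"
  assumes "i < n" "j < n"
  shows "cmod (mat_pow n M k i j) \<le> (real n * B) ^ k"
  using assms(2,3)
proof (induction k arbitrary: i j)
  case 0
  then show ?case by simp
next
  case (Suc k)
  have entry_le: "cmod (M i l) \<le> B" if "l < n" for l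
  proof -
    have "cmod (M i l) \<le> (\<Sum>j<n. cmod (M i j))"
      by (rule member_le_sum) (use that in auto)
    also have "\<dots> \<le> B"
      unfolding B_def by (rule member_le_sum) (use Suc.prems in \<open>auto intro: sum_nonneg\<close>)
    finally show ?thesis .
  qed
  have "cmod (mat_pow n M (Suc k) i j) \<le> (\<Sum>l<n. cmod (M i l) * cmod (mat_pow n M k l j))"
    by (simp add: mat_mult_def norm_mult order_trans[OF norm_sum])
  also have "\<dots> \<le> (\<Sum>l<n. B * (real n * B) ^ k)"
    by (intro sum_mono mult_mono) (use entry_le Suc in \<open>auto simp: B_def intro!: sum_nonneg\<close>)
  also have "\<dots> = (real n * B) ^ Suc k"
    by simp
  finally show ?case .
qed

lemma summable_mat_exp_series:
  fixes M :: "nat \<Rightarrow> nat \<Rightarrow> complex"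
  assumes "i < n" "j < n"
  shows "summable (\<lambda>k. mat_pow n M k i j / of_nat (fact k))"
proof (rule summable_comparison_test)
  define B where "B = (\<Sum>i<n. \<Sum>j<n. cmod (M i j))"
  show "summable (\<lambda>k. inverse (fact k) * (real n * B) ^ k)"
    by (rule summable_exp)
  have "norm (mat_pow n M k i j / of_nat (fact k)) \<le> inverse (fact k) * (real n * B) ^ k" for k
    using norm_mat_pow_le[OF assms, of M k] unfolding B_def
    by (simp add: norm_divide divide_right_mono field_simps)
  then show "\<exists>N. \<forall>k\<ge>N. norm (mat_pow n M k i j / of_nat (fact k)) \<le> inverse (fact k) * (real n * B) ^ k"
    by blast
qed

lemma sums_exp_of_nat_fact: "(\<lambda>k. z ^ k / of_nat (fact k)) sums exp (z :: complex)"
  using exp_converges[of z] by (simp add: scaleR_conv_of_real field_simps)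

lemma mat_vec_mat_exp_sums:
  fixes M :: "nat \<Rightarrow> nat \<Rightarrow> complex"
  assumes "i < n"
  shows "(\<lambda>k. mat_vec n (mat_pow n M k) v i / of_nat (fact k)) sums mat_vec n (mat_exp n M) v i"
proof -
  have "(\<lambda>k. \<Sum>j<n. mat_pow n M k i j / of_nat (fact k) * v j) sums (\<Sum>j<n. mat_exp n M i j * v j)"
  proof (rule sums_sum)
    fix j assume "j \<in> {..<n}"
    then have "(\<lambda>k. mat_pow n M k i j / of_nat (fact k)) sums mat_exp n M i j"
      unfolding mat_exp_def using summable_mat_exp_series assms by (simp add: summable_sums)
    then show "(\<lambda>k. mat_pow n M k i j / of_nat (fact k) * v j) sums (mat_exp n M i j * v j)"
      by (rule sums_mult2)
  qed
  then show ?thesis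
    by (simp add: mat_vec_def sum_divide_distrib field_simps)
qed

lemma mat_vec_mat_pow_eigenvector:
  assumes "\<And>i. i < n \<Longrightarrow> mat_vec n M v i = \<mu> * v i" "i < n"
  shows "mat_vec n (mat_pow n M k) v i = \<mu> ^ k * v i"
  using assms(2)
proof (induction k arbitrary: i)
  case 0
  then show ?case by (simp add: mat_vec_def if_distrib[where f="\<lambda>a. a * _"] cong: if_cong)
next
  case (Suc k)
  have "mat_vec n (mat_pow n M (Suc k)) v i = (\<Sum>l<n. M i l * mat_vec n (mat_pow n M k) v l)"
    unfolding mat_vec_def mat_pow.simps mat_mult_def
    by (simp add: sum_distrib_left sum_distrib_right mult.assoc) (rule sum.swap)
  also have "\<dots> = \<mu> ^ k * mat_vec n M v i"
    using Suc.IH by (simp add: mat_vec_def sum_distrib_left mult_ac)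
  finally show ?case
    using assms(1)[OF Suc.prems] by simp
qed

lemma mat_vec_mat_exp_eigenvector:
  assumes "\<And>i. i < n \<Longrightarrow> mat_vec n M v i = \<mu> * v i" "i < n"
  shows "mat_vec n (mat_exp n M) v i = exp \<mu> * v i"
proof -
  have "(\<lambda>k. mat_vec n (mat_pow n M k) v i / of_nat (fact k)) sums (exp \<mu> * v i)"
    using sums_mult2[OF sums_exp_of_nat_fact, of \<mu> "v i"]
    by (simp add: mat_vec_mat_pow_eigenvector[OF assms] field_simps)
  then show ?thesis
    using mat_vec_mat_exp_sums[OF assms(2)] sums_unique2 by blast
qed

lemma left_eigenvector_mat_pow:
  assumes "\<And>j. j < n \<Longrightarrow> (\<Sum>i<n. w i * M i j) = \<mu> * w j" "j < n"
  shows "(\<Sum>i<n. w i * mat_pow n M k i j) = \<mu> ^ k * w j"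
  using assms(2)
proof (induction k arbitrary: j)
  case 0
  then show ?case by (simp add: if_distrib cong: if_cong)
next
  case (Suc k)
  have "(\<Sum>i<n. w i * mat_pow n M (Suc k) i j) = (\<Sum>l<n. (\<Sum>i<n. w i * M i l) * mat_pow n M k l j)"
    unfolding mat_pow.simps mat_mult_def
    by (simp add: sum_distrib_left sum_distrib_right mult.assoc) (rule sum.swap)
  also have "\<dots> = \<mu> * (\<Sum>l<n. w l * mat_pow n M k l j)"
    using assms(1) by (simp add: sum_distrib_left mult_ac)
  finally show ?case
    using Suc by simp
qed

lemma left_eigenvector_mat_exp:
  assumes "\<And>j. j < n \<Longrightarrow> (\<Sum>i<n. w i * M i j) = \<mu> * w j"
  shows "(\<Sum>i<n. w i * mat_vec n (mat_exp n M) x i) = exp \<mu> * (\<Sum>j<n. w j * x j)"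
proof -
  have "(\<lambda>k. \<Sum>i<n. w i * (mat_vec n (mat_pow n M k) x i / of_nat (fact k)))
          sums (\<Sum>i<n. w i * mat_vec n (mat_exp n M) x i)"
    by (intro sums_sum sums_mult mat_vec_mat_exp_sums) auto
  moreover have "(\<Sum>i<n. w i * (mat_vec n (mat_pow n M k) x i / of_nat (fact k)))
                 = \<mu> ^ k / of_nat (fact k) * (\<Sum>j<n. w j * x j)" for k
  proof -
    have "(\<Sum>i<n. w i * mat_vec n (mat_pow n M k) x i) = (\<Sum>j<n. (\<Sum>i<n. w i * mat_pow n M k i j) * x j)"
      unfolding mat_vec_def
      by (simp add: sum_distrib_left sum_distrib_right mult.assoc) (rule sum.swap)
    then show ?thesis
      by (simp add: left_eigenvector_mat_pow[OF assms] sum_divide_distrib[symmetric]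
          sum_distrib_left mult_ac)
  qed
  ultimately show ?thesis
    using sums_mult2[OF sums_exp_of_nat_fact, of \<mu> "\<Sum>j<n. w j * x j"] sums_unique2 by force
qed

lemma mat_vec_add: "mat_vec n E (\<lambda>j. f j + g j) i = mat_vec n E f i + mat_vec n E g i"
  by (simp add: mat_vec_def sum.distrib distrib_left)

lemma mat_vec_scale: "mat_vec n E (\<lambda>j. c * f j) i = c * mat_vec n E f i"
  by (simp add: mat_vec_def sum_distrib_left mult_ac)

lemma mat_vec_cong: "(\<And>j. j < n \<Longrightarrow> f j = g j) \<Longrightarrow> mat_vec n E f i = mat_vec n E g i"
  by (simp add: mat_vec_def)

section \<open>Trigonometric and arithmetic facts\<close>

lemma cis_eq_1_imp_multiple_2pi: "cis x = 1 \<Longrightarrow> \<exists>q::int. x = 2 * pi * of_int q"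
proof -
  assume "cis x = 1"
  then have "cos x = 1"
    by (metis cis.sel(1) one_complex.sel(1))
  then obtain q :: int where "x = of_int q * 2 * pi"
    using cos_one_2pi_int by blast
  then show ?thesis
    by (intro exI[of _ q]) simp
qed

lemma sum_cos_roots_of_unity:
  fixes m :: int
  assumes "\<not> int N dvd m"
  shows "(\<Sum>k<N. cos (real k * (2 * pi * of_int m / real N))) = 0"
proof (cases "N = 0")
  case False
  define z where "z = cis (2 * pi * of_int m / real N)"
  have "z ^ N = cis (2 * pi * of_int m)"
    using False by (simp add: z_def DeMoivre)
  then have z_pow: "z ^ N = 1"
    by simp
  have "z \<noteq> 1"
  proof
    assume "z = 1"
    then obtain q :: int where "2 * pi * of_int m / real N = 2 * pi * of_int q"
      unfolding z_def using cis_eq_1_imp_multiple_2pi by blast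
    then have "of_int m = (of_int (q * int N) :: real)"
      using False by (simp add: field_simps)
    then have "m = q * int N"
      by (simp only: of_int_eq_iff)
    then show False
      using assms by simp
  qed
  have "(\<Sum>k<N. cos (real k * (2 * pi * of_int m / real N))) = Re (\<Sum>k<N. z ^ k)"
    by (simp only: z_def Re_sum cos_n_Re_cis_pow_n)
  also have "\<dots> = 0"
    using \<open>z \<noteq> 1\<close> by (simp add: sum_gp_strict z_pow)
  finally show ?thesis .
qed simp

lemma pi_fraction_bounds:
  assumes "0 < j" "j < n"
  shows "0 < real j * pi / real n" "real j * pi / real n < pi"
proof -
  have "real j * pi < real n * pi"
    using assms by simp
  then show "real j * pi / real n < pi"
    using assms by (simp add: field_simps)
qed (use assms in simp)

lemma sin_pi_fraction_pos: "0 < j \<Longrightarrow> j < n \<Longrightarrow> 0 < sin (real j * pi / real n)"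
  using pi_fraction_bounds by (blast intro: sin_gt_zero)

lemma sin_pi_fraction_eq_0_imp_dvd:
  assumes "0 < n" "sin (real m * pi / real n) = 0"
  shows "n dvd m"
proof -
  obtain q :: int where "real m * pi / real n = of_int q * pi"
    using assms(2) sin_zero_iff_int2 by blast
  then have "real m = of_int q * real n"
    using assms(1) by (simp add: field_simps)
  then have "int m = q * int n"
    by (metis of_int_eq_iff of_int_mult of_int_of_nat_eq)
  then show ?thesis
    by (metis dvd_triv_right int_dvd_int_iff)
qed

lemma sin_eq_sin_cases:
  fixes x y :: real
  assumes "0 < x" "x < pi" "0 < y" "y < pi" "sin x = sin y"
  shows "x = y \<or> x + y = pi"
proof -
  have "sin ((x - y) / 2) = 0 \<or> cos ((x + y) / 2) = 0"
    using assms(5) sin_diff_sin[of x y] by simp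
  then show ?thesis
  proof
    assume "sin ((x - y) / 2) = 0"
    then have "(x - y) / 2 = 0"
      by (rule sin_eq_0_pi[rotated 2]) (use assms in auto)
    then show ?thesis
      by simp
  next
    assume "cos ((x + y) / 2) = 0"
    then have "cos ((x + y) / 2) = cos (pi / 2)"
      by simp
    then have "(x + y) / 2 = pi / 2"
      by (rule cos_inj_pi[rotated 4]) (use assms in auto)
    then show ?thesis
      by simp
  qed
qed

lemma chebyshev_cos_integral:
  fixes a b :: int
  assumes "of_int b * (2 * cos \<theta>) = of_int a"
  shows "\<exists>r::int. of_int b ^ Suc k * (2 * cos (real (Suc k) * \<theta>)) = of_int (a ^ Suc k + b * r)"
proof (induction k rule: less_induct)
  case (less k)
  consider "k = 0" | "k = 1" | m where "k = Suc (Suc m)"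
    by (metis One_nat_def not0_implies_Suc)
  then show ?case
  proof cases
    case 1
    then show ?thesis
      using assms by (intro exI[of _ 0]) simp
  next
    case 2
    have "of_int b ^ 2 * (2 * cos (2 * \<theta>)) = (of_int b * (2 * cos \<theta>))\<^sup>2 - 2 * of_int b ^ 2"
      unfolding cos_double_cos by (simp add: power2_eq_square algebra_simps)
    then show ?thesis
      using 2 assms by (intro exI[of _ "-2 * b"]) (simp add: numeral_2_eq_2 power2_eq_square)
  next
    case 3
    define c where "c j = 2 * cos (real j * \<theta>)" for j :: nat
    define B where "B = (of_int b :: real)"
    have "m < k" "Suc m < k"
      using 3 by simp_all
    obtain r1 where r1: "B ^ Suc m * c (Suc m) = of_int (a ^ Suc m + b * r1)"
      using less.IH[OF \<open>m < k\<close>] unfolding B_def c_def by blast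
    obtain r2 where r2: "B ^ Suc (Suc m) * c (Suc (Suc m)) = of_int (a ^ Suc (Suc m) + b * r2)"
      using less.IH[OF \<open>Suc m < k\<close>] unfolding B_def c_def by blast
    have "cos (real (Suc (Suc m)) * \<theta> + \<theta>) + cos (real (Suc (Suc m)) * \<theta> - \<theta>)
            = 2 * cos \<theta> * cos (real (Suc (Suc m)) * \<theta>)"
      by (simp add: cos_add cos_diff)
    then have rec: "c (Suc (Suc (Suc m))) = c 1 * c (Suc (Suc m)) - c (Suc m)"
      unfolding c_def by (simp add: algebra_simps)
    have "B ^ Suc k * c (Suc k) = B * c 1 * (B ^ Suc (Suc m) * c (Suc (Suc m))) - B\<^sup>2 * (B ^ Suc m * c (Suc m))"
      unfolding rec 3 by (simp add: algebra_simps power2_eq_square)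
    also have "\<dots> = of_int (a ^ Suc k + b * (a * r2 - b * a ^ Suc m - b * b * r1))"
      using assms unfolding r1 r2 3 by (simp add: B_def c_def algebra_simps power2_eq_square)
    finally show ?thesis
      unfolding B_def c_def by blast
  qed
qed

lemma cos_pi_fraction_irrational:
  assumes "4 \<le> n"
  shows "cos (pi / real n) \<notin> \<rat>"
proof
  define \<theta> where "\<theta> = pi / real n"
  assume "cos (pi / real n) \<in> \<rat>"
  then have "2 * cos \<theta> \<in> \<rat>"
    unfolding \<theta>_def by simp
  then obtain a b :: int where "b > 0" "coprime a b" and ab: "2 * cos \<theta> = of_int a / of_int b"
    by (rule Rats_cases')
  then have b_cos: "of_int b * (2 * cos \<theta>) = of_int a"
    by simp
  obtain r :: int where "of_int b ^ n * (2 * cos (real n * \<theta>)) = of_int (a ^ n + b * r)"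
    using chebyshev_cos_integral[OF b_cos, of "n - 1"] assms by (auto simp del: of_nat_Suc)
  moreover have "cos (real n * \<theta>) = -1"
    unfolding \<theta>_def using assms by simp
  ultimately have "of_int (- 2 * b ^ n) = (of_int (a ^ n + b * r) :: real)"
    by simp
  then have "a ^ n = b * (- 2 * b ^ (n - 1) - r)"
    using assms by (simp only: of_int_eq_iff) (simp add: algebra_simps power_eq_if)
  then have "b dvd a ^ n"
    by simp
  moreover have "coprime (a ^ n) b"
    using \<open>coprime a b\<close> by simp
  ultimately have "\<bar>b\<bar> = 1"
    using coprime_common_divisor_int[of "a ^ n" b b] by simp
  then have "b = 1"
    using \<open>b > 0\<close> by simp
  then have two_cos: "2 * cos \<theta> = of_int a"
    using ab by simp
  have "cos (pi / 3) < cos \<theta>" "cos \<theta> < cos 0"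
    unfolding \<theta>_def using assms by (intro cos_monotone_0_pi; simp add: field_simps)+
  then have "1 < a" "a < 2"
    using two_cos by (simp_all add: cos_60)
  then show False
    by simp
qed

lemma rational_of_cos_multiples_123:
  fixes \<theta> \<rho> :: real and m1 m2 m3 :: int
  assumes "cos \<theta> \<noteq> 0" "cos (2 * \<theta>) \<noteq> 0"
    and c1: "cos \<theta> = \<rho> * of_int m1" and c2: "cos (2 * \<theta>) = \<rho> * of_int m2"
    and c3: "cos (3 * \<theta>) = \<rho> * of_int m3"
  shows "\<rho> \<in> \<rat>"
proof -
  have "\<rho> \<noteq> 0" "m1 \<noteq> 0" "m2 \<noteq> 0"
    using assms(1,2) unfolding c1 c2 by auto
  have "\<rho> * m3 = 4 * (\<rho> * m1) ^ 3 - 3 * (\<rho> * m1)"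
    using cos_treble_cos[of \<theta>] unfolding c1 c3 .
  then have "\<rho> * (m3 + 3 * m1) = \<rho> * (4 * \<rho>\<^sup>2 * m1 ^ 3)"
    by (simp add: algebra_simps power2_eq_square power3_eq_cube)
  then have "m3 + 3 * m1 = 4 * \<rho>\<^sup>2 * m1 ^ 3"
    using \<open>\<rho> \<noteq> 0\<close> mult_left_cancel by blast
  then have "\<rho>\<^sup>2 = (m3 + 3 * m1) / (4 * m1 ^ 3)"
    using \<open>m1 \<noteq> 0\<close> by (simp add: field_simps)
  then have "\<rho>\<^sup>2 \<in> \<rat>"
    by simp
  moreover have "\<rho> = (2 * \<rho>\<^sup>2 * m1\<^sup>2 - 1) / m2"
    using cos_double_cos[of \<theta>] \<open>m2 \<noteq> 0\<close> unfolding c1 c2 by (simp add: field_simps power_mult_distrib)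
  ultimately show ?thesis
    by (metis Rats_1 Rats_diff Rats_divide Rats_mult Rats_of_int Rats_number_of)
qed

lemma rational_of_cos_multiples_124:
  fixes \<theta> \<rho> :: real and m1 m2 m4 :: int
  assumes "(cos (2 * \<theta>))\<^sup>2 \<noteq> (cos \<theta>)\<^sup>2"
    and c1: "cos \<theta> = \<rho> * of_int m1" and c2: "cos (2 * \<theta>) = \<rho> * of_int m2"
    and c4: "cos (4 * \<theta>) = \<rho> * of_int m4"
  shows "\<rho> \<in> \<rat>"
proof -
  have double: "\<rho> * m2 = 2 * (\<rho> * m1)\<^sup>2 - 1"
    using cos_double_cos[of \<theta>] unfolding c1 c2 .
  have quadruple: "\<rho> * m4 = 2 * (\<rho> * m2)\<^sup>2 - 1"
    using cos_double_cos[of "2 * \<theta>"] c4 unfolding c2 by simp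
  have "\<rho> * m4 * m1\<^sup>2 = (2 * (\<rho> * m2)\<^sup>2 - 1) * m1\<^sup>2"
    by (simp only: quadruple)
  moreover have "\<rho> * m2 * m2\<^sup>2 = (2 * (\<rho> * m1)\<^sup>2 - 1) * m2\<^sup>2"
    by (simp only: double)
  ultimately have key: "\<rho> * (m4 * m1\<^sup>2 - m2 ^ 3) = m2\<^sup>2 - m1\<^sup>2"
    by (simp add: algebra_simps power2_eq_square power3_eq_cube)
  moreover have "(m2\<^sup>2 :: real) \<noteq> m1\<^sup>2"
    using assms(1) unfolding c1 c2 by (auto simp: power_mult_distrib)
  ultimately have "(m4 * m1\<^sup>2 - m2 ^ 3 :: real) \<noteq> 0"
    by auto
  then have "\<rho> = (m2\<^sup>2 - m1\<^sup>2) / (m4 * m1\<^sup>2 - m2 ^ 3)"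
    using key by (simp add: field_simps)
  then show ?thesis
    by simp
qed

lemma cos_rational_of_integer_multiples:
  fixes \<theta> \<rho> :: real and m1 m2 mj :: int
  assumes "0 < \<theta>" "\<theta> < pi / 4"
    and c1: "cos \<theta> = \<rho> * of_int m1" and c2: "cos (2 * \<theta>) = \<rho> * of_int m2"
    and "j = 3 \<or> j = 4" and cj: "cos (real j * \<theta>) = \<rho> * of_int mj"
  shows "cos \<theta> \<in> \<rat>"
proof -
  have "0 < cos (2 * \<theta>)"
    using assms(1,2) by (intro cos_gt_zero) simp_all
  moreover have "cos (2 * \<theta>) < cos \<theta>"
    using assms(1,2) by (intro cos_monotone_0_pi) simp_all
  ultimately have "cos \<theta> \<noteq> 0" "cos (2 * \<theta>) \<noteq> 0" "(cos (2 * \<theta>))\<^sup>2 \<noteq> (cos \<theta>)\<^sup>2"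
    by (auto dest: power_strict_mono[of _ _ 2])
  from assms(5) have "\<rho> \<in> \<rat>"
  proof
    assume "j = 3"
    then have "cos (3 * \<theta>) = \<rho> * of_int mj"
      using cj by simp
    then show ?thesis
      by (rule rational_of_cos_multiples_123[OF \<open>cos \<theta> \<noteq> 0\<close> \<open>cos (2 * \<theta>) \<noteq> 0\<close> c1 c2])
  next
    assume "j = 4"
    then have "cos (4 * \<theta>) = \<rho> * of_int mj"
      using cj by simp
    then show ?thesis
      by (rule rational_of_cos_multiples_124[OF \<open>(cos (2 * \<theta>))\<^sup>2 \<noteq> (cos \<theta>)\<^sup>2\<close> c1 c2])
  qed
  then show ?thesis
    unfolding c1 by simp
qed

lemma not_dvd_mult_diff:
  fixes n x k :: nat
  assumes "\<not> n dvd x * k" "k \<le> n"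
  shows "\<not> n dvd x * (n - k)"
proof
  assume "n dvd x * (n - k)"
  then have "n dvd x * n - x * (n - k)"
    by (simp add: dvd_diff_nat)
  moreover have "x * n - x * (n - k) = x * k"
    using assms(2) by (simp add: diff_mult_distrib2)
  ultimately show False
    using assms(1) by simp
qed

lemma not_dvd_small_multiples:
  fixes n x :: nat
  assumes "0 < x" "x < n" "2 * x \<noteq> n"
  shows "\<not> n dvd x * 1" "\<not> n dvd x * 2" "\<not> n dvd x * 3 \<or> \<not> n dvd x * 4"
proof -
  show "\<not> n dvd x * 1"
    using assms by (auto dest: dvd_imp_le)
  show "\<not> n dvd x * 2"
  proof
    assume "n dvd x * 2"
    then obtain q where q: "x * 2 = n * q"
      by blast
    have "n * q < n * 2"
      using q assms(2) by linarith
    then have "q < 2"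
      by simp
    moreover have "q \<noteq> 0"
    proof
      assume "q = 0"
      with q assms(1) show False
        by simp
    qed
    ultimately have "q = 1"
      by simp
    then show False
      using q assms(3) by simp
  qed
  show "\<not> n dvd x * 3 \<or> \<not> n dvd x * 4"
  proof (rule ccontr)
    assume "\<not> ?thesis"
    then have "n dvd x * 4 - x * 3"
      by (intro dvd_diff_nat) auto
    then have "n dvd x"
      by simp
    then show False
      using assms by (auto dest: dvd_imp_le)
  qed
qed

section \<open>Spectrum of the signless Laplacian of the path\<close>

definition path_plus_laplacian :: "nat \<Rightarrow> nat \<Rightarrow> nat \<Rightarrow> real" where
  "path_plus_laplacian n i j =
     (if i = j then real (degree n (path_adj n) i) else 0) + (if path_adj n i j then 1 else 0)"

lemma unsigned_laplacian_path: "unsigned_laplacian n (path_adj n) i j = of_real (path_plus_laplacian n i j)"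
  by (simp add: unsigned_laplacian_def path_plus_laplacian_def)

lemma path_plus_laplacian_sym: "path_plus_laplacian n i j = path_plus_laplacian n j i"
  by (auto simp: path_plus_laplacian_def path_adj_def)

lemma path_neighbours:
  "i < n \<Longrightarrow> {j. j < n \<and> path_adj n i j} =
     (if 0 < i then {i - 1} else {}) \<union> (if i + 1 < n then {i + 1} else {})"
  by (auto simp: path_adj_def)

lemma degree_path_adj:
  "i < n \<Longrightarrow> degree n (path_adj n) i = (if 0 < i then 1 else 0) + (if i + 1 < n then 1 else 0)"
  unfolding degree_def by (subst path_neighbours) (auto simp: card_insert_if)

lemma path_plus_laplacian_diag:
  "i < n \<Longrightarrow> path_plus_laplacian n i i = (if 0 < i then 1 else 0) + (if i + 1 < n then 1 else 0)"
  by (simp add: path_plus_laplacian_def degree_path_adj path_adj_def)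

lemma path_plus_laplacian_off_diag: "i \<noteq> j \<Longrightarrow> path_plus_laplacian n i j = (if path_adj n i j then 1 else 0)"
  by (simp add: path_plus_laplacian_def)

lemma path_plus_laplacian_mult:
  assumes "i < n"
  shows "(\<Sum>l<n. path_plus_laplacian n i l * f l) =
           (if 0 < i then f i + f (i - 1) else 0) + (if i + 1 < n then f i + f (i + 1) else 0)"
proof -
  have "(\<Sum>l<n. path_plus_laplacian n i l * f l)
          = real (degree n (path_adj n) i) * f i + sum f {l. l < n \<and> path_adj n i l}"
    using assms
    by (simp add: path_plus_laplacian_def distrib_right sum.distrib if_distrib[where f="\<lambda>a. a * _"]
        sum.If_cases Int_def lessThan_def conj_commute cong: if_cong)
  also have "\<dots> = (if 0 < i then f i + f (i - 1) else 0) + (if i + 1 < n then f i + f (i + 1) else 0)"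
    using assms by (subst path_neighbours) (auto simp: degree_path_adj algebra_simps)
  finally show ?thesis .
qed

text \<open>The signless Laplacian of the bipartite graph \<open>P\<^sub>n\<close> is conjugate to its Laplacian by the
  sign change \<open>(-1)\<^sup>i\<close>, and these are the conjugated cosine eigenvectors of the latter. Letting
  \<open>k\<close> range over \<open>{..<2*n}\<close> lists every eigenvector twice (up to sign; \<open>path_eigvec n n = 0\<close>),
  but turns the orthogonality relations into sums over all \<open>2n\<close>-th roots of unity.\<close>

definition path_eigvec :: "nat \<Rightarrow> nat \<Rightarrow> nat \<Rightarrow> real" where
  "path_eigvec n k i = (-1) ^ i * cos (real k * (2 * real i + 1) * pi / (2 * real n))"

definition path_eigval :: "nat \<Rightarrow> nat \<Rightarrow> real" where
  "path_eigval n k = 2 - 2 * cos (real k * pi / real n)"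

lemma path_eigvec_neighbours:
  fixes i n k :: nat
  assumes "i < n"
  defines "X \<equiv> real k * (2 * real i + 1) * pi / (2 * real n)" and "h \<equiv> real k * pi / real n"
  shows "(if 0 < i then path_eigvec n k i + path_eigvec n k (i - 1) else 0) = (-1) ^ i * (cos X - cos (X - h))"
    and "(if i + 1 < n then path_eigvec n k i + path_eigvec n k (i + 1) else 0) = (-1) ^ i * (cos X - cos (X + h))"
proof -
  have n_pos: "0 < real n"
    using assms by simp
  have angle_shift: "path_eigvec n k j = (-1) ^ j * cos (X + (real j - real i) * h)" for j
    unfolding path_eigvec_def X_def h_def using n_pos by (simp add: field_simps)
  show "(if 0 < i then path_eigvec n k i + path_eigvec n k (i - 1) else 0) = (-1) ^ i * (cos X - cos (X - h))"
  proof (cases i)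
    case 0
    then have "X - h = - X"
      unfolding X_def h_def using n_pos by (simp add: field_simps)
    then have "cos (X - h) = cos X"
      by (simp only: cos_minus)
    then show ?thesis
      using 0 by simp
  qed (simp add: angle_shift algebra_simps)
  show "(if i + 1 < n then path_eigvec n k i + path_eigvec n k (i + 1) else 0) = (-1) ^ i * (cos X - cos (X + h))"
  proof (cases "i + 1 < n")
    case False
    then have i_eq: "real i = real n - 1"
      using assms by simp
    have "X + h = real k * pi + h / 2" and "X = real k * pi - h / 2"
      unfolding X_def h_def i_eq using n_pos by (simp_all add: field_simps)
    then have "cos (X + h) = cos X"
      by (simp add: cos_add cos_diff)
    then show ?thesis
      using False by simp
  qed (simp add: angle_shift algebra_simps)
qed

lemma path_eigvec_eigen:
  assumes "i < n"
  shows "(\<Sum>l<n. path_plus_laplacian n i l * path_eigvec n k l) = path_eigval n k * path_eigvec n k i"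
proof -
  define X where "X = real k * (2 * real i + 1) * pi / (2 * real n)"
  define h where "h = real k * pi / real n"
  have cos_X_h: "cos (X - h) = 2 * cos X * cos h - cos (X + h)"
    by (simp add: cos_add cos_diff)
  have eigvec: "path_eigvec n k i = (-1) ^ i * cos X"
    by (simp add: path_eigvec_def X_def)
  have eigval: "path_eigval n k = 2 - 2 * cos h"
    by (simp add: path_eigval_def h_def)
  show ?thesis
    unfolding path_plus_laplacian_mult[OF assms] path_eigvec_neighbours[OF assms, of k, folded X_def h_def]
    unfolding eigvec eigval cos_X_h by (simp add: algebra_simps)
qed

lemma path_eigvec_product:
  assumes "0 < n"
  shows "2 * (path_eigvec n k i * path_eigvec n k j)
           = (-1) ^ (i + j) * (cos (real k * (2 * pi * of_int (int i - int j) / real (2 * n)))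
                               + cos (real k * (2 * pi * of_int (int (i + j + 1)) / real (2 * n))))"
proof -
  define x where "x = real k * (2 * real i + 1) * pi / (2 * real n)"
  define y where "y = real k * (2 * real j + 1) * pi / (2 * real n)"
  have diff: "x - y = real k * (2 * pi * of_int (int i - int j) / real (2 * n))"
    and sum: "x + y = real k * (2 * pi * of_int (int (i + j + 1)) / real (2 * n))"
    unfolding x_def y_def using assms by (simp_all add: field_simps)
  have "2 * (path_eigvec n k i * path_eigvec n k j) = (-1) ^ (i + j) * (2 * (cos x * cos y))"
    by (simp add: path_eigvec_def x_def y_def power_add)
  also have "2 * (cos x * cos y) = cos (x - y) + cos (x + y)"
    by (simp add: cos_times_cos)
  finally show ?thesis
    by (simp only: diff sum)
qed

lemma path_eigvec_orthogonal:
  assumes "i < n" "j < n"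
  shows "(\<Sum>k<2 * n. path_eigvec n k i * path_eigvec n k j) = (if i = j then real n else 0)"
proof -
  define cos_sum where "cos_sum m = (\<Sum>k<2 * n. cos (real k * (2 * pi * of_int m / real (2 * n))))"
    for m :: int
  have "2 * (\<Sum>k<2 * n. path_eigvec n k i * path_eigvec n k j)
          = (-1) ^ (i + j) * (cos_sum (int i - int j) + cos_sum (int (i + j + 1)))"
    using path_eigvec_product[of n] assms
    by (simp only: cos_sum_def sum_distrib_left sum.distrib distrib_left)
  moreover have "cos_sum (int (i + j + 1)) = 0"
    unfolding cos_sum_def using assms by (intro sum_cos_roots_of_unity) (auto dest: zdvd_imp_le)
  moreover have "cos_sum (int i - int j) = (if i = j then 2 * real n else 0)"
  proof (cases "i = j")
    case False
    then have "\<not> int (2 * n) dvd int i - int j"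
      using assms dvd_imp_le_int[of "int i - int j" "int (2 * n)"] by auto
    then have "cos_sum (int i - int j) = 0"
      unfolding cos_sum_def by (rule sum_cos_roots_of_unity)
    then show ?thesis
      using False by simp
  qed (simp add: cos_sum_def)
  ultimately show ?thesis
    by auto
qed

lemma path_plus_laplacian_spectral:
  assumes "i < n" "j < n"
  shows "(\<Sum>k<2 * n. path_eigval n k * path_eigvec n k i * path_eigvec n k j) = real n * path_plus_laplacian n i j"
proof -
  have "(\<Sum>k<2 * n. path_eigval n k * path_eigvec n k i * path_eigvec n k j)
          = (\<Sum>k<2 * n. path_eigvec n k i * (\<Sum>l<n. path_plus_laplacian n j l * path_eigvec n k l))"
    using path_eigvec_eigen[OF assms(2)] by (simp add: mult_ac)
  also have "\<dots> = (\<Sum>l<n. path_plus_laplacian n j l * (\<Sum>k<2 * n. path_eigvec n k i * path_eigvec n k l))"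
    by (simp add: sum_distrib_left mult_ac) (rule sum.swap)
  also have "\<dots> = (\<Sum>l<n. path_plus_laplacian n j l * (if i = l then real n else 0))"
    using assms by (intro sum.cong) (auto simp: path_eigvec_orthogonal)
  also have "\<dots> = real n * path_plus_laplacian n i j"
    using assms by (simp add: path_plus_laplacian_sym if_distrib cong: if_cong)
  finally show ?thesis .
qed

lemma path_eigvec_edge_sum:
  assumes "0 < n"
  shows "path_eigvec n k i + path_eigvec n k (i + 1)
           = (-1) ^ i * (2 * sin (real (i + 1) * real k * pi / real n) * sin (real k * pi / (2 * real n)))"
proof -
  define x where "x = real k * (2 * real i + 1) * pi / (2 * real n)"
  define y where "y = real k * (2 * real (i + 1) + 1) * pi / (2 * real n)"
  have mid: "(x + y) / 2 = real (i + 1) * real k * pi / real n"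
    and half: "(y - x) / 2 = real k * pi / (2 * real n)"
    unfolding x_def y_def using assms by (simp_all add: field_simps)
  have "path_eigvec n k i + path_eigvec n k (i + 1) = (-1) ^ i * (cos x - cos y)"
    by (simp add: path_eigvec_def x_def y_def algebra_simps)
  then show ?thesis
    by (simp only: cos_diff_cos mid half)
qed

lemma path_eigvec_reflect:
  assumes "i < n"
  shows "path_eigvec n k (n - 1 - i) = (-1) ^ (n - 1 + k) * path_eigvec n k i"
proof -
  define x where "x = real k * (2 * real i + 1) * pi / (2 * real n)"
  have sign: "(-1::real) ^ (n - 1 - i) = (-1) ^ (n - 1) * (-1) ^ i"
  proof -
    have "n - 1 = (n - 1 - i) + i"
      using assms by simp
    then have "(-1::real) ^ (n - 1) * (-1) ^ i = (-1) ^ (n - 1 - i) * ((-1) ^ i * (-1) ^ i)"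
      by (metis power_add mult.assoc)
    then show ?thesis
      by (simp flip: power_mult_distrib)
  qed
  have "real k * (2 * real (n - 1 - i) + 1) * pi / (2 * real n) = real k * pi - x"
    unfolding x_def using assms by (simp add: of_nat_diff field_simps)
  then have "path_eigvec n k (n - 1 - i) = (-1) ^ (n - 1 - i) * ((-1) ^ k * cos x)"
    by (simp add: path_eigvec_def cos_diff)
  then show ?thesis
    unfolding sign by (simp add: path_eigvec_def x_def power_add mult_ac)
qed

lemma path_eigval_complement:
  assumes "k \<le> n" "0 < n"
  shows "path_eigval n (n - k) = path_eigval n k + 4 * cos (real k * pi / real n)"
proof -
  have "real (n - k) * pi / real n = pi - real k * pi / real n"
    using assms by (simp add: of_nat_diff field_simps)
  then show ?thesis
    by (simp add: path_eigval_def)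
qed

section \<open>Plus state transfer in the eigenbasis\<close>

abbreviation path_evolution :: "nat \<Rightarrow> real \<Rightarrow> nat \<Rightarrow> nat \<Rightarrow> complex" where
  "path_evolution n t \<equiv> mat_exp n (\<lambda>k l. \<i> * of_real t * unsigned_laplacian n (path_adj n) k l)"

lemma path_evolution_eigenvector:
  assumes "\<And>i. i < n \<Longrightarrow> (\<Sum>l<n. path_plus_laplacian n i l * v l) = \<mu> * v i" "i < n"
  shows "mat_vec n (path_evolution n t) (\<lambda>j. of_real (v j)) i = cis (t * \<mu>) * of_real (v i)"
  unfolding cis_conv_exp
proof (rule mat_vec_mat_exp_eigenvector[OF _ assms(2)])
  fix i assume "i < n"
  have "mat_vec n (\<lambda>k l. \<i> * of_real t * unsigned_laplacian n (path_adj n) k l) (\<lambda>j. of_real (v j)) i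
          = \<i> * of_real t * of_real (\<Sum>l<n. path_plus_laplacian n i l * v l)"
    by (simp add: mat_vec_def unsigned_laplacian_path sum_distrib_left mult_ac)
  also have "\<dots> = \<i> * of_real (t * \<mu>) * of_real (v i)"
    unfolding assms(1)[OF \<open>i < n\<close>] by simp
  finally show "mat_vec n (\<lambda>k l. \<i> * of_real t * unsigned_laplacian n (path_adj n) k l) (\<lambda>j. of_real (v j)) i
               = \<i> * of_real (t * \<mu>) * of_real (v i)" .
qed

lemma path_eigvec_evolution:
  "(\<Sum>i<n. of_real (path_eigvec n k i) * mat_vec n (path_evolution n t) x i)
     = cis (t * path_eigval n k) * (\<Sum>j<n. of_real (path_eigvec n k j) * x j)"
  unfolding cis_conv_exp
proof (rule left_eigenvector_mat_exp)
  fix j assume "j < n"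
  have "(\<Sum>i<n. of_real (path_eigvec n k i) * (\<i> * of_real t * unsigned_laplacian n (path_adj n) i j))
          = \<i> * of_real t * of_real (\<Sum>i<n. path_plus_laplacian n j i * path_eigvec n k i)"
    by (simp add: unsigned_laplacian_path path_plus_laplacian_sym[of n _ j] sum_distrib_left mult_ac)
  also have "\<dots> = \<i> * of_real (t * path_eigval n k) * of_real (path_eigvec n k j)"
    unfolding path_eigvec_eigen[OF \<open>j < n\<close>] by simp
  finally show "(\<Sum>i<n. of_real (path_eigvec n k i) * (\<i> * of_real t * unsigned_laplacian n (path_adj n) i j))
               = \<i> * of_real (t * path_eigval n k) * of_real (path_eigvec n k j)" .
qed

lemma sum_mult_basis_pair:
  "a < n \<Longrightarrow> b < n \<Longrightarrow> (\<Sum>j<n. f j * (basis_vec a j + basis_vec b j)) = f a + f b"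
  by (simp add: basis_vec_def distrib_left sum.distrib if_distrib[where f="\<lambda>x. _ * x"] cong: if_cong)

definition eigen_transfer :: "nat \<Rightarrow> real \<Rightarrow> complex \<Rightarrow> nat \<Rightarrow> nat \<Rightarrow> nat \<Rightarrow> nat \<Rightarrow> bool" where
  "eigen_transfer n t \<gamma> a b c d \<longleftrightarrow>
     (\<forall>k. cis (t * path_eigval n k) * of_real (path_eigvec n k a + path_eigvec n k b)
            = \<gamma> * of_real (path_eigvec n k c + path_eigvec n k d))"

lemma plus_pst_path_eigen_transfer:
  assumes "plus_pst n (path_adj n) a b c d" "a < n" "b < n" "c < n" "d < n"
  obtains t \<gamma> where "cmod \<gamma> = 1" "eigen_transfer n t \<gamma> a b c d"
proof -
  obtain t \<gamma> where "cmod \<gamma> = 1" and evolution: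
    "\<And>i. i < n \<Longrightarrow> mat_vec n (path_evolution n t) (\<lambda>v. basis_vec a v + basis_vec b v) i
                    = \<gamma> * (basis_vec c i + basis_vec d i)"
    using assms(1) unfolding plus_pst_def by blast
  have "cis (t * path_eigval n k) * of_real (path_eigvec n k a + path_eigvec n k b)
          = \<gamma> * of_real (path_eigvec n k c + path_eigvec n k d)" for k
  proof -
    let ?w = "\<lambda>i. complex_of_real (path_eigvec n k i)"
    have "cis (t * path_eigval n k) * of_real (path_eigvec n k a + path_eigvec n k b)
            = (\<Sum>i<n. ?w i * mat_vec n (path_evolution n t) (\<lambda>v. basis_vec a v + basis_vec b v) i)"
      using path_eigvec_evolution sum_mult_basis_pair[OF assms(2,3), of ?w] by simp
    also have "\<dots> = (\<Sum>i<n. ?w i * (\<gamma> * (basis_vec c i + basis_vec d i)))"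
      by (intro sum.cong) (simp_all add: evolution)
    also have "\<dots> = \<gamma> * (\<Sum>i<n. ?w i * (basis_vec c i + basis_vec d i))"
      by (simp add: sum_distrib_left mult_ac)
    also have "\<dots> = \<gamma> * of_real (path_eigvec n k c + path_eigvec n k d)"
      using sum_mult_basis_pair[OF assms(4,5), of ?w] by simp
    finally show ?thesis .
  qed
  then show ?thesis
    using that \<open>cmod \<gamma> = 1\<close> unfolding eigen_transfer_def by blast
qed

lemma eigen_transfer_abs:
  assumes "eigen_transfer n t \<gamma> a b c d" "cmod \<gamma> = 1"
  shows "\<bar>path_eigvec n k a + path_eigvec n k b\<bar> = \<bar>path_eigvec n k c + path_eigvec n k d\<bar>"
proof -
  have "cmod (cis (t * path_eigval n k) * of_real (path_eigvec n k a + path_eigvec n k b))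
          = cmod (\<gamma> * of_real (path_eigvec n k c + path_eigvec n k d))"
    using assms(1) unfolding eigen_transfer_def by metis
  then show ?thesis
    using assms(2) by (simp add: norm_mult del: of_real_add)
qed

lemma eigen_transfer_commute:
  "eigen_transfer n t \<gamma> a b c d \<longleftrightarrow> eigen_transfer n t \<gamma> b a c d"
  "eigen_transfer n t \<gamma> a b c d \<longleftrightarrow> eigen_transfer n t \<gamma> a b d c"
  by (simp_all add: eigen_transfer_def add.commute)

definition pair_form :: "nat \<Rightarrow> nat \<Rightarrow> nat \<Rightarrow> real" where
  "pair_form n a b = path_plus_laplacian n a a + path_plus_laplacian n b b + 2 * path_plus_laplacian n a b"

lemma pair_form_spectral:
  assumes "a < n" "b < n"
  shows "(\<Sum>k<2 * n. path_eigval n k * (path_eigvec n k a + path_eigvec n k b)\<^sup>2) = real n * pair_form n a b"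
proof -
  have "(\<Sum>k<2 * n. path_eigval n k * (path_eigvec n k a + path_eigvec n k b)\<^sup>2)
          = (\<Sum>k<2 * n. path_eigval n k * path_eigvec n k a * path_eigvec n k a)
            + (\<Sum>k<2 * n. path_eigval n k * path_eigvec n k b * path_eigvec n k b)
            + 2 * (\<Sum>k<2 * n. path_eigval n k * path_eigvec n k a * path_eigvec n k b)"
    by (simp add: power2_eq_square sum.distrib sum_distrib_left algebra_simps)
  also have "\<dots> = real n * pair_form n a b"
    by (simp only: path_plus_laplacian_spectral assms pair_form_def) (simp add: algebra_simps)
  finally show ?thesis .
qed

lemma eigen_transfer_pair_form:
  assumes "eigen_transfer n t \<gamma> a b c d" "cmod \<gamma> = 1" "a < n" "b < n" "c < n" "d < n"
  shows "pair_form n a b = pair_form n c d"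
proof -
  have squares: "(path_eigvec n k a + path_eigvec n k b)\<^sup>2 = (path_eigvec n k c + path_eigvec n k d)\<^sup>2" for k
    using eigen_transfer_abs[OF assms(1,2)] by (metis power2_abs)
  have "real n * pair_form n a b = (\<Sum>k<2 * n. path_eigval n k * (path_eigvec n k a + path_eigvec n k b)\<^sup>2)"
    using pair_form_spectral[OF assms(3,4)] by simp
  also have "\<dots> = real n * pair_form n c d"
    unfolding squares by (rule pair_form_spectral[OF assms(5,6)])
  finally show ?thesis
    using assms(3) by simp
qed

lemma pair_form_edge:
  assumes "path_adj n a b" "3 \<le> n"
  shows "5 \<le> pair_form n a b"
proof -
  have "a \<noteq> b" "a < n" "b < n"
    using assms(1) by (auto simp: path_adj_def)
  then show ?thesis
    using assms by (auto simp: pair_form_def path_plus_laplacian_diag path_plus_laplacian_off_diag path_adj_def)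
qed

lemma pair_form_non_edge:
  assumes "\<not> path_adj n a b" "a < n" "b < n" "a \<noteq> b"
  shows "pair_form n a b \<le> 4"
  using assms by (simp add: pair_form_def path_plus_laplacian_diag path_plus_laplacian_off_diag)

lemma eigen_transfer_edges_mirror:
  assumes "eigen_transfer n t \<gamma> A (A + 1) C (C + 1)" "cmod \<gamma> = 1" "A + 1 < n" "C + 1 < n" "A \<noteq> C"
  shows "A + C + 2 = n"
proof -
  define x where "x = real (A + 1) * pi / real n"
  define y where "y = real (C + 1) * pi / real n"
  have n_pos: "0 < n"
    using assms by simp
  have x_bounds: "0 < x" "x < pi" and y_bounds: "0 < y" "y < pi"
    using pi_fraction_bounds[of "A + 1" n] pi_fraction_bounds[of "C + 1" n] assms(3,4)
    unfolding x_def y_def by auto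
  have "\<bar>path_eigvec n 1 A + path_eigvec n 1 (A + 1)\<bar> = \<bar>path_eigvec n 1 C + path_eigvec n 1 (C + 1)\<bar>"
    by (rule eigen_transfer_abs[OF assms(1,2)])
  then have "\<bar>sin x\<bar> * sin (pi / (2 * real n)) = \<bar>sin y\<bar> * sin (pi / (2 * real n))"
    unfolding path_eigvec_edge_sum[OF n_pos] x_def y_def by (simp add: abs_mult)
  moreover have "0 < sin (pi / (2 * real n))"
    using sin_pi_fraction_pos[of 1 "2 * n"] n_pos by simp
  moreover have "0 < sin x"
    unfolding x_def by (rule sin_pi_fraction_pos) (use assms(3) in simp_all)
  moreover have "0 < sin y"
    unfolding y_def by (rule sin_pi_fraction_pos) (use assms(4) in simp_all)
  ultimately have "sin x = sin y"
    by simp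
  then have "x = y \<or> x + y = pi"
    using sin_eq_sin_cases x_bounds y_bounds by blast
  moreover have "x \<noteq> y"
    unfolding x_def y_def using assms(5) n_pos by (simp add: field_simps)
  ultimately have "(real (A + 1) + real (C + 1)) * pi / real n = pi"
    unfolding x_def y_def by (simp add: add_divide_distrib distrib_right)
  then have "real (A + 1) + real (C + 1) = real n"
    using n_pos by (simp add: divide_eq_eq)
  then show ?thesis
    by linarith
qed

lemma eigen_transfer_mirror_phase:
  assumes "eigen_transfer n t \<gamma> A (A + 1) C (C + 1)" "A + C + 2 = n"
    and "0 < k" "k < 2 * n" "\<not> n dvd (A + 1) * k"
  shows "cis (t * path_eigval n k) = \<gamma> * (-1) ^ (n - 1 + k)"
proof -
  define s where "s = path_eigvec n k A + path_eigvec n k (A + 1)"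
  have n_pos: "0 < n"
    using assms(2) by simp
  have "sin (real (A + 1) * real k * pi / real n) \<noteq> 0"
    using sin_pi_fraction_eq_0_imp_dvd[OF n_pos, of "(A + 1) * k"] assms(5)
    unfolding of_nat_mult by blast
  moreover have "0 < sin (real k * pi / (2 * real n))"
    using sin_pi_fraction_pos[of k "2 * n"] assms(3,4) by simp
  ultimately have "s \<noteq> 0"
    unfolding s_def path_eigvec_edge_sum[OF n_pos] by simp
  have C_eq: "C = n - 1 - (A + 1)" and C1_eq: "C + 1 = n - 1 - A"
    using assms(2) by simp_all
  have "path_eigvec n k C = (-1) ^ (n - 1 + k) * path_eigvec n k (A + 1)"
    unfolding C_eq by (rule path_eigvec_reflect) (use assms(2) in simp)
  moreover have "path_eigvec n k (C + 1) = (-1) ^ (n - 1 + k) * path_eigvec n k A"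
    unfolding C1_eq by (rule path_eigvec_reflect) (use assms(2) in simp)
  ultimately have "path_eigvec n k C + path_eigvec n k (C + 1) = (-1) ^ (n - 1 + k) * s"
    unfolding s_def by (simp add: algebra_simps)
  then have "cis (t * path_eigval n k) * of_real s = \<gamma> * (-1) ^ (n - 1 + k) * of_real s"
    using assms(1) unfolding eigen_transfer_def s_def by (simp add: mult.assoc del: of_real_add)
  then show ?thesis
    using \<open>s \<noteq> 0\<close> by simp
qed

lemma phases_quarter_multiple:
  assumes "cis (t * path_eigval n k) = \<sigma> * (-1) ^ k"
    and "cis (t * path_eigval n (n - k)) = \<sigma> * (-1) ^ (n - k)"
    and "\<sigma> \<noteq> 0" "0 < k" "k \<le> n"
  shows "\<exists>m::int. t * cos (real k * pi / real n) = of_int m * pi / 4"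
proof -
  define c where "c = cos (real k * pi / real n)"
  have "cis (t * path_eigval n (n - k)) = cis (t * path_eigval n k) * cis (4 * t * c)"
    using path_eigval_complement[of k n] assms(4,5) by (simp add: c_def cis_mult algebra_simps)
  then have "\<sigma> * (-1) ^ (n - k) = \<sigma> * ((-1) ^ k * cis (4 * t * c))"
    unfolding assms(1,2) by (simp add: mult.assoc)
  then have "(-1) ^ (n - k) = (-1) ^ k * cis (4 * t * c)"
    using assms(3) by simp
  then have "((-1) ^ (n - k))\<^sup>2 = (((-1) ^ k)\<^sup>2 * cis (4 * t * c) ^ 2 :: complex)"
    by (simp add: power_mult_distrib)
  then have "cis (8 * (t * c)) = 1"
    by (simp add: DeMoivre flip: power_mult)
  then obtain q :: int where "8 * (t * c) = 2 * pi * of_int q"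
    using cis_eq_1_imp_multiple_2pi by blast
  then have "t * c = of_int q * pi / 4"
    by (simp add: field_simps)
  then show ?thesis
    unfolding c_def by blast
qed

lemma eigen_transfer_mirror_quarter_multiple:
  assumes transfer: "eigen_transfer n t \<gamma> A (A + 1) C (C + 1)" and mirror: "A + C + 2 = n"
    and "cmod \<gamma> = 1" "0 < k" "k < n" "\<not> n dvd (A + 1) * k"
  shows "\<exists>m::int. t * cos (real k * pi / real n) = of_int m * pi / 4"
proof (rule phases_quarter_multiple)
  define \<sigma> where "\<sigma> = \<gamma> * (-1) ^ (n - 1)"
  have phase: "cis (t * path_eigval n l) = \<sigma> * (-1) ^ l"
    if "0 < l" "l < n" "\<not> n dvd (A + 1) * l" for l
    using eigen_transfer_mirror_phase[OF transfer mirror, of l, unfolded power_add] that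
    by (simp add: \<sigma>_def mult.assoc)
  show "cis (t * path_eigval n k) = \<sigma> * (-1) ^ k"
    by (rule phase) (use assms in simp_all)
  show "cis (t * path_eigval n (n - k)) = \<sigma> * (-1) ^ (n - k)"
    by (rule phase[OF _ _ not_dvd_mult_diff[OF assms(6)]]) (use assms in simp_all)
  show "\<sigma> \<noteq> 0"
    using assms(3) by (auto simp: \<sigma>_def)
qed (use assms in simp_all)

lemma no_eigen_transfer_between_path_edges:
  assumes "5 \<le> n" "A + 1 < n" "C + 1 < n" "A \<noteq> C" "cmod \<gamma> = 1"
    and transfer: "eigen_transfer n t \<gamma> A (A + 1) C (C + 1)"
  shows False
proof -
  have mirror: "A + C + 2 = n"
    by (rule eigen_transfer_edges_mirror[OF transfer assms(5,2,3,4)])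
  have good: "\<not> n dvd (A + 1) * 1" "\<not> n dvd (A + 1) * 2" "\<not> n dvd (A + 1) * 3 \<or> \<not> n dvd (A + 1) * 4"
    using not_dvd_small_multiples[of "A + 1" n] assms(2,4) mirror by simp_all
  then obtain j where j: "j = 3 \<or> j = 4" "\<not> n dvd (A + 1) * j"
    by blast
  have "t \<noteq> 0"
  proof
    assume "t = 0"
    then have "1 = \<gamma> * (-1) ^ n" "1 = - \<gamma> * (-1) ^ n"
      using eigen_transfer_mirror_phase[OF transfer mirror, of 1] assms(1)
        eigen_transfer_mirror_phase[OF transfer mirror, of 2] good
      by (simp_all add: power_add)
    then show False
      by simp
  qed
  note quarter = eigen_transfer_mirror_quarter_multiple[OF transfer mirror assms(5)]
  obtain m1 :: int where "t * cos (real 1 * pi / real n) = of_int m1 * pi / 4"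
    using quarter[of 1] good(1) assms(1) by auto
  moreover obtain m2 :: int where "t * cos (real 2 * pi / real n) = of_int m2 * pi / 4"
    using quarter[of 2] good(2) assms(1) by auto
  moreover obtain mj :: int where "t * cos (real j * pi / real n) = of_int mj * pi / 4"
    using quarter[of j] j assms(1) by auto
  ultimately have c1: "cos (pi / real n) = pi / (4 * t) * of_int m1"
    and c2: "cos (2 * (pi / real n)) = pi / (4 * t) * of_int m2"
    and cj: "cos (real j * (pi / real n)) = pi / (4 * t) * of_int mj"
    using \<open>t \<noteq> 0\<close> by (simp_all add: field_simps)
  have "0 < pi / real n" "pi / real n < pi / 4"
    using assms(1) by (simp_all add: field_simps)
  then have "cos (pi / real n) \<in> \<rat>"
    using cos_rational_of_integer_multiples[OF _ _ c1 c2 j(1) cj] by blast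
  then show False
    using cos_pi_fraction_irrational assms(1) by simp
qed

lemma path_adj_edge_cases:
  assumes "path_adj n a b"
  obtains A where "A + 1 < n" "a = A \<and> b = A + 1 \<or> a = A + 1 \<and> b = A"
  using assms unfolding path_adj_def by (metis add.commute)

lemma plus_pst_path_only_if:
  assumes "2 \<le> n" "a < n" "b < n" "c < n" "d < n" "a \<noteq> b" "c \<noteq> d" "{a, b} \<noteq> {c, d}"
    and "path_adj n a b \<or> path_adj n c d" and "plus_pst n (path_adj n) a b c d"
  shows "n \<in> {3, 4}"
proof (rule ccontr)
  assume "n \<notin> {3, 4}"
  obtain t \<gamma> where "cmod \<gamma> = 1" and transfer: "eigen_transfer n t \<gamma> a b c d"
    using plus_pst_path_eigen_transfer[OF assms(10,2-5)] by blast
  have "n \<noteq> 2"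
  proof
    assume "n = 2"
    then have "{a, b} = {0, 1}" "{c, d} = {0, 1}"
      using assms(2-7) by auto
    with assms(8) show False
      by simp
  qed
  with assms(1) \<open>n \<notin> {3, 4}\<close> have "5 \<le> n"
    by auto
  have edge_iff: "path_adj n x y \<longleftrightarrow> 5 \<le> pair_form n x y" if "x < n" "y < n" "x \<noteq> y" for x y
    using pair_form_edge[of n x y] pair_form_non_edge[of n x y] that \<open>5 \<le> n\<close> by fastforce
  have "pair_form n a b = pair_form n c d"
    by (rule eigen_transfer_pair_form[OF transfer \<open>cmod \<gamma> = 1\<close> assms(2-5)])
  then have "path_adj n a b" "path_adj n c d"
    using assms(9) edge_iff[OF assms(2,3,6)] edge_iff[OF assms(4,5,7)] by simp_all
  obtain A where A: "A + 1 < n" "a = A \<and> b = A + 1 \<or> a = A + 1 \<and> b = A"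
    using path_adj_edge_cases[OF \<open>path_adj n a b\<close>] by blast
  obtain C where C: "C + 1 < n" "c = C \<and> d = C + 1 \<or> c = C + 1 \<and> d = C"
    using path_adj_edge_cases[OF \<open>path_adj n c d\<close>] by blast
  have "eigen_transfer n t \<gamma> A (A + 1) C (C + 1)"
    using transfer A(2) C(2) eigen_transfer_commute(1)[of n t \<gamma> "A + 1" A]
      eigen_transfer_commute(2)[of n t \<gamma> _ _ "C + 1" C] by auto
  moreover have "A \<noteq> C"
    using A(2) C(2) assms(8) by auto
  ultimately show False
    using no_eigen_transfer_between_path_edges \<open>5 \<le> n\<close> A(1) C(1) \<open>cmod \<gamma> = 1\<close> by blast
qed

section \<open>Transfer on the paths with three and four vertices\<close>

lemma path_3_evolution:
  assumes "i < 3"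
  shows "mat_vec 3 (path_evolution 3 (pi / 2)) (\<lambda>v. basis_vec 0 v + basis_vec 1 v) i
           = - \<i> * (basis_vec 1 i + basis_vec 2 i)"
proof -
  define t :: real where "t = pi / 2"
  define v1 :: "nat \<Rightarrow> real" where "v1 j = (if j = 0 then 1 else if j = 1 then 0 else -1)" for j
  define v3 :: "nat \<Rightarrow> real" where "v3 j = (if j = 1 then 2 else 1)" for j
  have vertices: "j = 0 \<or> j = 1 \<or> j = 2" if "j < 3" for j :: nat
    using that by auto
  have eig1: "(\<Sum>l<3. path_plus_laplacian 3 j l * v1 l) = 1 * v1 j" if "j < 3" for j
    using vertices[OF that] by (auto simp: path_plus_laplacian_mult v1_def)
  have eig3: "(\<Sum>l<3. path_plus_laplacian 3 j l * v3 l) = 3 * v3 j" if "j < 3" for j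
    using vertices[OF that] by (auto simp: path_plus_laplacian_mult v3_def)
  have "cis (t * 3) = cis (pi / 2) ^ 3"
    unfolding DeMoivre t_def by (simp add: ac_simps)
  then have "cis (t * 3) = - \<i>"
    by (simp add: power3_eq_cube)
  have "mat_vec 3 (path_evolution 3 t) (\<lambda>v. basis_vec 0 v + basis_vec 1 v) i
          = mat_vec 3 (path_evolution 3 t) (\<lambda>j. 1/2 * of_real (v1 j) + 1/2 * of_real (v3 j)) i"
  proof (rule mat_vec_cong)
    fix j :: nat
    assume "j < 3"
    then show "basis_vec 0 j + basis_vec 1 j = 1/2 * of_real (v1 j) + 1/2 * of_real (v3 j)"
      using vertices[of j] by (auto simp: basis_vec_def v1_def v3_def)
  qed
  also have "\<dots> = 1/2 * (cis (t * 1) * of_real (v1 i)) + 1/2 * (cis (t * 3) * of_real (v3 i))"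
    by (simp only: mat_vec_add mat_vec_scale path_evolution_eigenvector[OF eig1 assms]
        path_evolution_eigenvector[OF eig3 assms])
  also have "\<dots> = - \<i> * (basis_vec 1 i + basis_vec 2 i)"
    using vertices[OF assms] \<open>cis (t * 3) = - \<i>\<close>
    by (auto simp: t_def basis_vec_def v1_def v3_def field_simps)
  finally show ?thesis
    unfolding t_def .
qed

lemma plus_pst_path_3: "plus_pst 3 (path_adj 3) 0 1 1 2"
  unfolding plus_pst_def using path_3_evolution
  by (intro exI[of _ "pi / 2"] conjI exI[of _ "- \<i>"]) auto

lemma path_4_evolution:
  assumes "i < 4"
  shows "mat_vec 4 (path_evolution 4 (pi / sqrt 2)) (\<lambda>v. basis_vec 0 v + basis_vec 1 v) i
           = - cis (sqrt 2 * pi) * (basis_vec 2 i + basis_vec 3 i)"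
proof -
  define t :: real where "t = pi / sqrt 2"
  define e where "e = cis (sqrt 2 * pi)"
  define v2 :: "nat \<Rightarrow> real" where "v2 j = (if j < 2 then 1 else -1)" for j
  define v_plus :: "nat \<Rightarrow> real" where "v_plus j = (if j = 0 \<or> j = 3 then 1 else 1 + sqrt 2)" for j
  define v_minus :: "nat \<Rightarrow> real" where "v_minus j = (if j = 0 \<or> j = 3 then 1 else 1 - sqrt 2)" for j
  have vertices: "j = 0 \<or> j = 1 \<or> j = 2 \<or> j = 3" if "j < 4" for j :: nat
    using that by auto
  have eig2: "(\<Sum>l<4. path_plus_laplacian 4 j l * v2 l) = 2 * v2 j" if "j < 4" for j
    using vertices[OF that] by (auto simp: path_plus_laplacian_mult v2_def)
  have eig_plus: "(\<Sum>l<4. path_plus_laplacian 4 j l * v_plus l) = (2 + sqrt 2) * v_plus j" if "j < 4" for j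
    using vertices[OF that] by (auto simp: path_plus_laplacian_mult v_plus_def algebra_simps)
  have eig_minus: "(\<Sum>l<4. path_plus_laplacian 4 j l * v_minus l) = (2 - sqrt 2) * v_minus j" if "j < 4" for j
    using vertices[OF that] by (auto simp: path_plus_laplacian_mult v_minus_def algebra_simps)
  have "t * 2 = sqrt 2 * pi" "t * (2 + sqrt 2) = sqrt 2 * pi + pi" "t * (2 - sqrt 2) = sqrt 2 * pi - pi"
    unfolding t_def by (simp_all add: field_simps)
  then have phases: "cis (t * 2) = e" "cis (t * (2 + sqrt 2)) = - e" "cis (t * (2 - sqrt 2)) = - e"
    unfolding e_def by (simp_all add: cis_mult[symmetric] cis_divide[symmetric])
  have "mat_vec 4 (path_evolution 4 t) (\<lambda>v. basis_vec 0 v + basis_vec 1 v) i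
          = mat_vec 4 (path_evolution 4 t)
              (\<lambda>j. 1/2 * of_real (v2 j) + (1/4 * of_real (v_plus j) + 1/4 * of_real (v_minus j))) i"
  proof (rule mat_vec_cong)
    fix j :: nat
    assume "j < 4"
    then show "basis_vec 0 j + basis_vec 1 j
                 = 1/2 * of_real (v2 j) + (1/4 * of_real (v_plus j) + 1/4 * of_real (v_minus j))"
      using vertices[of j] by (auto simp: basis_vec_def v2_def v_plus_def v_minus_def field_simps)
  qed
  also have "\<dots> = 1/2 * (cis (t * 2) * of_real (v2 i))
                  + (1/4 * (cis (t * (2 + sqrt 2)) * of_real (v_plus i))
                     + 1/4 * (cis (t * (2 - sqrt 2)) * of_real (v_minus i)))"
    by (simp only: mat_vec_add mat_vec_scale path_evolution_eigenvector[OF eig2 assms]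
        path_evolution_eigenvector[OF eig_plus assms] path_evolution_eigenvector[OF eig_minus assms])
  also have "\<dots> = e * (1/2 * of_real (v2 i) - 1/4 * of_real (v_plus i) - 1/4 * of_real (v_minus i))"
    unfolding phases by (simp add: algebra_simps)
  also have "\<dots> = - e * (basis_vec 2 i + basis_vec 3 i)"
    using vertices[OF assms] by (auto simp: basis_vec_def v2_def v_plus_def v_minus_def field_simps)
  finally show ?thesis
    unfolding t_def e_def .
qed

lemma plus_pst_path_4: "plus_pst 4 (path_adj 4) 0 1 2 3"
  unfolding plus_pst_def using path_4_evolution
  by (intro exI[of _ "pi / sqrt 2"] conjI exI[of _ "- cis (sqrt 2 * pi)"]) auto

theorem mainTheorem19:
  fixes n :: nat
  assumes "n \<ge> 2"
  shows "(\<exists>a b c d. a < n \<and> b < n \<and> c < n \<and> d < n \<and> a \<noteq> b \<and> c \<noteq> d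
            \<and> {a, b} \<noteq> {c, d}
            \<and> (path_adj n a b \<or> path_adj n c d)
            \<and> plus_pst n (path_adj n) a b c d)
         \<longleftrightarrow> n \<in> {3, 4}"
proof
  assume "\<exists>a b c d. a < n \<and> b < n \<and> c < n \<and> d < n \<and> a \<noteq> b \<and> c \<noteq> d
            \<and> {a, b} \<noteq> {c, d} \<and> (path_adj n a b \<or> path_adj n c d) \<and> plus_pst n (path_adj n) a b c d"
  then show "n \<in> {3, 4}"
    using plus_pst_path_only_if[OF assms] by blast
next
  assume "n \<in> {3, 4}"
  then consider "n = 3" | "n = 4"
    by blast
  then show "\<exists>a b c d. a < n \<and> b < n \<and> c < n \<and> d < n \<and> a \<noteq> b \<and> c \<noteq> d
            \<and> {a, b} \<noteq> {c, d} \<and> (path_adj n a b \<or> path_adj n c d) \<and> plus_pst n (path_adj n) a b c d"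
  proof cases
    case 1
    then show ?thesis
      using plus_pst_path_3 by (intro exI[of _ 0] exI[of _ 1] exI[of _ 1] exI[of _ 2])
        (auto simp: path_adj_def doubleton_eq_iff)
  next
    case 2
    then show ?thesis
      using plus_pst_path_4 by (intro exI[of _ 0] exI[of _ 1] exI[of _ 2] exI[of _ 3])
        (auto simp: path_adj_def doubleton_eq_iff)
  qed
qed

end
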